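(* For every integer $n\ge 1$, the $n$-dimensional volume of \[ \mathcal{T}^n=\left\{x\in\mathbb{R}^n : \|x\|_\infty\le 1 \text{ and } 1+\sum_{i=1}^n x_i\ge 0\right\} \] is \[ \mathrm{Vol}(\mathcal{T}^n) = 2^n \left[1 - \frac{1}{n!}\sum_{k=0}^{\lfloor \frac{n-1}{2} \rfloor} (-1)^k\binom{n}{k} \left(\frac{n-1}{2}-k \right)^n \right]. \]
   Context: $\mathcal{T}^n$ is called the trace nonnegative polytope. Here $0^n$ with $n\ge1$ equals $0$. *)

theory Defs
  imports "HOL-Analysis.Analysis"
begin

definition trace_nonneg_polytope :: "(real ^ 'n) set" where
  "trace_nonneg_polytope =
     {x :: real ^ 'n. (\<forall>i. \<bar>x $ i\<bar> \<le> 1) \<and> 1 + (\<Sum>i\<in>UNIV. x $ i) \<ge> 0}"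

end

theory Submission
  imports Defs
begin

text \<open>A point of the cube \<open>[-1,1]\<^sup>n\<close> lies outside \<open>\<T>\<^sup>n\<close> iff its coordinate sum is below \<open>-1\<close>;
  shifted by \<open>1\<close>, these points form the part of \<open>[0,2]\<^sup>n\<close> below the hyperplane
  \<open>\<Sum> y\<^sub>i = n - 1\<close>. Inclusion-exclusion over the set \<open>K\<close> of coordinates exceeding \<open>2\<close>
  reduces its volume to those of the points \<open>y \<ge> 0\<close> with \<open>\<Sum> y\<^sub>i < n - 1\<close> and
  \<open>y\<^sub>i > 2\<close> on \<open>K\<close>. Up to a null set this is a translate of the corner simplex of size
  \<open>n - 1 - 2|K|\<close>, of volume \<open>max 0 (n - 1 - 2|K|)\<^sup>n / n!\<close>, so only the terms with
  \<open>|K| \<le> (n-1)/2\<close> survive.\<close>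

definition corner_simplex :: "real \<Rightarrow> (real^'n::finite) set" where
  "corner_simplex t = {x. (\<forall>i. 0 \<le> x$i) \<and> (\<Sum>i\<in>UNIV. x$i) \<le> t}"

lemma sum_inner_Basis_cart: "(\<Sum>b\<in>Basis. x \<bullet> b) = (\<Sum>i\<in>UNIV. x $ i)"
  for x :: "real^'n"
proof -
  have Basis: "(Basis :: (real^'n) set) = range (\<lambda>i. axis i 1)"
    by (auto simp: Basis_vec_def)
  show ?thesis
    unfolding Basis by (subst sum.reindex) (auto simp: inj_on_def axis_eq_axis inner_axis)
qed

lemma corner_simplex_1: "corner_simplex 1 = (convex hull (insert 0 Basis) :: (real^'n) set)"
  unfolding std_simplex sum_inner_Basis_cart
  by (auto simp: corner_simplex_def Basis_vec_def inner_axis)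

lemma corner_simplex_neg: "t < 0 \<Longrightarrow> corner_simplex t = {}"
  by (auto simp: corner_simplex_def) (meson not_le order.strict_trans2 sum_nonneg)

lemma corner_simplex_scaleR:
  assumes "0 \<le> t"
  shows "corner_simplex t = (\<lambda>x. t *\<^sub>R x) ` (corner_simplex 1 :: (real^'n) set)"
proof (cases "t = 0")
  case True
  have "corner_simplex 0 = {0::real^'n}"
    by (auto simp: corner_simplex_def vec_eq_iff)
       (metis UNIV_I antisym finite sum_nonneg sum_nonneg_eq_0_iff)
  moreover have "(0::real^'n) \<in> corner_simplex 1"
    by (simp add: corner_simplex_def)
  ultimately show ?thesis
    using True by auto
next
  case False
  show ?thesis
  proof safe
    fix x :: "real^'n"
    assume "x \<in> corner_simplex t"
    then have "(1/t) *\<^sub>R x \<in> corner_simplex 1"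
      using False assms
      by (auto simp: corner_simplex_def sum_divide_distrib[symmetric] divide_simps)
    moreover have "x = t *\<^sub>R ((1/t) *\<^sub>R x)"
      using False by simp
    ultimately show "x \<in> (\<lambda>x. t *\<^sub>R x) ` corner_simplex 1"
      by blast
  next
    fix x :: "real^'n"
    assume "x \<in> corner_simplex 1"
    then show "t *\<^sub>R x \<in> corner_simplex t"
      using assms by (auto simp: corner_simplex_def sum_distrib_left[symmetric] mult_left_le)
  qed
qed

lemma compact_corner_simplex: "compact (corner_simplex t :: (real^'n) set)"
proof (cases "0 \<le> t")
  case True
  have "compact (corner_simplex 1 :: (real^'n) set)"
    unfolding corner_simplex_1 by (simp add: finite_imp_compact_convex_hull)
  then show ?thesis
    unfolding corner_simplex_scaleR[OF True] using compact_scaling[of _ t] by simp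
qed (simp add: corner_simplex_neg)

lemma lmeasurable_corner_simplex: "corner_simplex t \<in> lmeasurable"
  by (simp add: compact_corner_simplex lmeasurable_compact)

lemma measure_corner_simplex:
  "measure lebesgue (corner_simplex t :: (real^'n) set) = max 0 t ^ CARD('n) / fact CARD('n)"
proof (cases "0 \<le> t")
  case True
  have "measure lebesgue (corner_simplex 1 :: (real^'n) set) = 1 / fact CARD('n)"
    using compact_corner_simplex[of 1] unfolding corner_simplex_1
    by (subst measure_completion) (auto intro: borel_closed compact_imp_closed simp: content_std_simplex)
  then show ?thesis
    unfolding corner_simplex_scaleR[OF True]
    using measure_lebesgue_affine[of t 0 "corner_simplex 1 :: (real^'n) set"] True by simp
qed (simp add: corner_simplex_neg)

lemma negligible_coordinate_hyperplanes:
  "negligible ({x::real^'n. (\<Sum>i\<in>UNIV. x$i) = t} \<union> (\<Union>i. {x. x$i = 0}))"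
proof -
  have "{x::real^'n. (\<Sum>i\<in>UNIV. x$i) = t} = {x. 1 \<bullet> x = t}"
    by (simp add: inner_vec_def)
  moreover have "{x::real^'n. x$i = 0} = {x. axis i 1 \<bullet> x = 0}" for i
    by (simp add: inner_commute inner_axis)
  ultimately show ?thesis
    by (auto intro!: negligible_hyperplane)
qed

lemma measure_corner_simplex_squeeze:
  assumes "{x::real^'n. (\<forall>i. 0 < x$i) \<and> (\<Sum>i\<in>UNIV. x$i) < t} \<subseteq> D" "D \<subseteq> corner_simplex t"
  shows "D \<in> lmeasurable" "measure lebesgue D = max 0 t ^ CARD('n) / fact CARD('n)"
proof -
  have "corner_simplex t - D \<subseteq> {x. (\<Sum>i\<in>UNIV. x$i) = t} \<union> (\<Union>i. {x. x$i = 0})"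
  proof
    fix x
    assume x: "x \<in> corner_simplex t - D"
    show "x \<in> {x. (\<Sum>i\<in>UNIV. x$i) = t} \<union> (\<Union>i. {x. x$i = 0})"
    proof (cases "(\<Sum>i\<in>UNIV. x$i) = t")
      case False
      with x have "(\<Sum>i\<in>UNIV. x$i) < t"
        by (simp add: corner_simplex_def)
      with x assms(1) obtain i where "\<not> 0 < x$i"
        by blast
      with x have "x$i = 0"
        by (auto simp: corner_simplex_def intro: order.antisym)
      then show ?thesis
        by blast
    qed simp
  qed
  with assms(2) have null: "negligible (corner_simplex t - D \<union> (D - corner_simplex t))"
    by (blast intro: negligible_subset[OF negligible_coordinate_hyperplanes])
  show "D \<in> lmeasurable"
    using lmeasurable_negligible_symdiff[OF lmeasurable_corner_simplex null] .
  show "measure lebesgue D = max 0 t ^ CARD('n) / fact CARD('n)"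
    using measure_negligible_symdiff[OF lmeasurable_corner_simplex null]
    by (simp add: measure_corner_simplex)
qed

definition simplex_exceeding :: "real \<Rightarrow> 'n set \<Rightarrow> real \<Rightarrow> (real^'n::finite) set" where
  "simplex_exceeding a K s = {y. (\<forall>i. 0 \<le> y$i) \<and> (\<forall>i\<in>K. a < y$i) \<and> (\<Sum>i\<in>UNIV. y$i) < s}"

lemma simplex_exceeding_eq_translation:
  fixes a :: real and K :: "'n::finite set"
  assumes "0 \<le> a"
  defines "c \<equiv> \<chi> i. if i \<in> K then a else 0"
  shows "simplex_exceeding a K s =
    (+) c ` {z. (\<forall>i. 0 \<le> z$i) \<and> (\<forall>i\<in>K. 0 < z$i) \<and> (\<Sum>i\<in>UNIV. z$i) < s - a * card K}"
proof -
  have coordinate: "(0 \<le> (y - c)$i \<and> (i \<in> K \<longrightarrow> 0 < (y - c)$i)) \<longleftrightarrow>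
      (0 \<le> y$i \<and> (i \<in> K \<longrightarrow> a < y$i))" for y i
    using assms(1) by (auto simp: c_def)
  have sum: "(\<Sum>i\<in>UNIV. (y - c)$i) = (\<Sum>i\<in>UNIV. y$i) - a * card K" for y
    by (simp add: c_def sum_subtractf sum.If_cases)
  have membership: "y \<in> simplex_exceeding a K s \<longleftrightarrow>
      (\<forall>i. 0 \<le> (y - c)$i) \<and> (\<forall>i\<in>K. 0 < (y - c)$i) \<and> (\<Sum>i\<in>UNIV. (y - c)$i) < s - a * card K" for y
    unfolding simplex_exceeding_def sum using coordinate[of y] by auto
  have translate: "(+) c ` D = {y. y - c \<in> D}" for D :: "(real^'n) set"
    by (force intro: image_eqI[of _ _ "_ - c"])
  show ?thesis
    unfolding translate by (rule set_eqI) (simp only: mem_Collect_eq membership)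
qed

lemma
  fixes a :: real and K :: "'n::finite set"
  assumes "0 \<le> a"
  shows lmeasurable_simplex_exceeding: "simplex_exceeding a K s \<in> lmeasurable"
    and measure_simplex_exceeding: "measure lebesgue (simplex_exceeding a K s) =
      max 0 (s - a * card K) ^ CARD('n) / fact CARD('n)"
proof -
  let ?D = "{z::real^'n. (\<forall>i. 0 \<le> z$i) \<and> (\<forall>i\<in>K. 0 < z$i) \<and> (\<Sum>i\<in>UNIV. z$i) < s - a * card K}"
  have "{x. (\<forall>i. 0 < x$i) \<and> (\<Sum>i\<in>UNIV. x$i) < s - a * card K} \<subseteq> ?D" "?D \<subseteq> corner_simplex (s - a * card K)"
    by (auto simp: corner_simplex_def less_imp_le)
  note squeeze = measure_corner_simplex_squeeze[OF this]
  show "simplex_exceeding a K s \<in> lmeasurable"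
    unfolding simplex_exceeding_eq_translation[OF assms] using squeeze(1) by (rule measurable_translation)
  show "measure lebesgue (simplex_exceeding a K s) = max 0 (s - a * card K) ^ CARD('n) / fact CARD('n)"
    unfolding simplex_exceeding_eq_translation[OF assms] measure_translation by (rule squeeze(2))
qed

lemma sum_Pow_card:
  assumes "finite A"
  shows "(\<Sum>K\<in>Pow A. g (card K)) = (\<Sum>k=0..card A. of_nat (card A choose k) * g k)"
proof -
  have "(\<Sum>K\<in>Pow A. g (card K)) = (\<Sum>k=0..card A. \<Sum>K\<in>{K \<in> Pow A. card K = k}. g (card K))"
    using assms by (intro sum.group[symmetric]) (auto intro: card_mono)
  also have "\<dots> = (\<Sum>k=0..card A. of_nat (card A choose k) * g k)"
    using n_subsets[OF assms] by (intro sum.cong) auto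
  finally show ?thesis .
qed

lemma Incl_Excl_lmeasurable: "Incl_Excl (\<lambda>S. S \<in> lmeasurable) (measure lebesgue)"
proof
  fix S T :: "'a set"
  assume "S \<in> lmeasurable" "T \<in> lmeasurable" "disjnt S T"
  then show "measure lebesgue (S \<union> T) = measure lebesgue S + measure lebesgue T"
    by (simp add: measure_Un2 disjnt_def Diff_triv Int_commute)
qed auto

definition cube_below_hyperplane :: "real \<Rightarrow> real \<Rightarrow> (real^'n::finite) set" where
  "cube_below_hyperplane a s = {y. (\<forall>i. 0 \<le> y$i \<and> y$i \<le> a) \<and> (\<Sum>i\<in>UNIV. y$i) < s}"

lemma
  fixes a s :: real
  assumes "0 \<le> a"
  shows lmeasurable_cube_below_hyperplane:
      "(cube_below_hyperplane a s :: (real^'n::finite) set) \<in> lmeasurable"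
    and measure_cube_below_hyperplane:
      "measure lebesgue (cube_below_hyperplane a s :: (real^'n) set) =
        (\<Sum>k=0..CARD('n). (-1)^k * real (CARD('n) choose k) * max 0 (s - a * k) ^ CARD('n))
          / fact CARD('n)"
proof -
  let ?E = "simplex_exceeding a :: 'n set \<Rightarrow> real \<Rightarrow> (real^'n) set"
  let ?U = "\<Union>i. ?E {i} s"
  define f where "f k = max 0 (s - a * k) ^ CARD('n) / fact CARD('n)" for k :: nat
  note E = lmeasurable_simplex_exceeding[OF assms] measure_simplex_exceeding[OF assms]
  have cube: "cube_below_hyperplane a s = ?E {} s - ?U"
    by (auto simp: cube_below_hyperplane_def simplex_exceeding_def not_less) (meson not_le)
  have U: "?U \<in> lmeasurable" "?U \<subseteq> ?E {} s"
    by (intro fmeasurable.finite_UN E(1)) (auto simp: simplex_exceeding_def)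
  show "(cube_below_hyperplane a s :: (real^'n) set) \<in> lmeasurable"
    unfolding cube by (intro fmeasurable.Diff E(1) U(1))
  have "\<Inter> ((\<lambda>i. ?E {i} s) ` K) = ?E K s" if "K \<noteq> {}" for K
    using that by (auto simp: simplex_exceeding_def)
  then have union: "measure lebesgue ?U =
      - (\<Sum>K | K \<subseteq> (UNIV :: 'n set) \<and> K \<noteq> {}. (-1) ^ card K * f (card K))"
    by (subst Incl_Excl.restricted_indexed[OF Incl_Excl_lmeasurable])
      (auto simp: E f_def sum_negf[symmetric])
  have "measure lebesgue (cube_below_hyperplane a s :: (real^'n) set) =
      measure lebesgue (?E {} s) - measure lebesgue ?U"
    unfolding cube by (rule measurable_measure_Diff[OF E(1) fmeasurableD[OF U(1)] U(2)])
  also have "\<dots> = f 0 + (\<Sum>K | K \<subseteq> (UNIV :: 'n set) \<and> K \<noteq> {}. (-1) ^ card K * f (card K))"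
    unfolding union by (simp add: E f_def)
  also have "\<dots> = (\<Sum>K\<in>Pow (UNIV :: 'n set). (-1) ^ card K * f (card K))"
  proof -
    have "Pow (UNIV :: 'n set) = insert {} {K. K \<subseteq> UNIV \<and> K \<noteq> {}}"
      by auto
    then show ?thesis
      by (simp only:) (subst sum.insert, auto)
  qed
  also have "\<dots> = (\<Sum>k=0..CARD('n). real (CARD('n) choose k) * ((-1) ^ k * f k))"
    by (rule sum_Pow_card) simp
  finally show "measure lebesgue (cube_below_hyperplane a s :: (real^'n) set) =
      (\<Sum>k=0..CARD('n). (-1)^k * real (CARD('n) choose k) * max 0 (s - a * k) ^ CARD('n))
        / fact CARD('n)"
    by (simp add: f_def sum_divide_distrib mult_ac)
qed

lemma trace_nonneg_polytope_eq_cube_Diff: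
  "(trace_nonneg_polytope :: (real^'n) set) =
    cbox (- 1) 1 - (\<lambda>y. y - 1) ` cube_below_hyperplane 2 (real CARD('n) - 1)"
proof -
  have shift: "(\<lambda>y. y - 1) ` C = {x. x + 1 \<in> C}" for C :: "(real^'n) set"
    by (force intro: image_eqI[of _ _ "_ + 1"])
  have box: "x \<in> cbox (- 1) 1 \<longleftrightarrow> (\<forall>i. \<bar>x$i\<bar> \<le> 1)" for x :: "real^'n"
    by (auto simp: mem_box_cart abs_le_iff)
  have coordinate: "0 \<le> (x + 1)$i \<and> (x + 1)$i \<le> 2 \<longleftrightarrow> \<bar>x$i\<bar> \<le> 1" for x :: "real^'n" and i
    by auto
  have sum: "(\<Sum>i\<in>UNIV. (x + 1)$i) = (\<Sum>i\<in>UNIV. x$i) + real CARD('n)" for x :: "real^'n"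
    by (simp add: sum.distrib)
  have "x + 1 \<in> cube_below_hyperplane 2 (real CARD('n) - 1) \<longleftrightarrow>
      (\<forall>i. \<bar>x$i\<bar> \<le> 1) \<and> 1 + (\<Sum>i\<in>UNIV. x$i) < 0" for x :: "real^'n"
    unfolding cube_below_hyperplane_def mem_Collect_eq coordinate sum by auto
  then show ?thesis
    unfolding trace_nonneg_polytope_def shift by (auto simp: box)
qed

lemma sum_max_pow_eq_sum_floor:
  fixes n :: nat
  assumes "1 \<le> n"
  shows "(\<Sum>k=0..n. (-1)^k * real (n choose k) * max 0 (real n - 1 - 2 * real k) ^ n) =
    2 ^ n * (\<Sum>k=0..nat \<lfloor>(real n - 1) / 2\<rfloor>. (-1)^k * real (n choose k) * ((real n - 1) / 2 - real k) ^ n)"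
proof -
  let ?m = "nat \<lfloor>(real n - 1) / 2\<rfloor>"
  have le_m: "k \<le> ?m \<longleftrightarrow> 2 * real k \<le> real n - 1" for k
    using assms by (simp add: le_nat_iff le_floor_iff mult.commute)
  have "2 * real ?m \<le> real n - 1"
    by (subst le_m[symmetric]) simp
  then have "real ?m \<le> real n"
    by linarith
  then have "?m \<le> n"
    by simp
  have "(\<Sum>k=0..n. (-1)^k * real (n choose k) * max 0 (real n - 1 - 2 * real k) ^ n) =
      (\<Sum>k=0..?m. (-1)^k * real (n choose k) * max 0 (real n - 1 - 2 * real k) ^ n)"
    using \<open>?m \<le> n\<close> assms by (intro sum.mono_neutral_right) (auto simp: le_m)
  also have "\<dots> = (\<Sum>k=0..?m. 2 ^ n * ((-1)^k * real (n choose k) * ((real n - 1) / 2 - real k) ^ n))"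
  proof (intro sum.cong refl)
    fix k
    assume "k \<in> {0..?m}"
    then have max: "max 0 (real n - 1 - 2 * real k) = 2 * ((real n - 1) / 2 - real k)"
      by (simp add: le_m)
    show "(-1)^k * real (n choose k) * max 0 (real n - 1 - 2 * real k) ^ n =
        2 ^ n * ((-1)^k * real (n choose k) * ((real n - 1) / 2 - real k) ^ n)"
      unfolding max power_mult_distrib by (simp only: mult_ac)
  qed
  finally show ?thesis
    by (simp add: sum_distrib_left)
qed

theorem corollary1:
  fixes n :: nat
  assumes "CARD('n::finite) = n"
  shows "measure lebesgue (trace_nonneg_polytope :: (real ^ 'n) set) =
    2 ^ n * (1 - (1 / fact n) *
      (\<Sum>k = 0..nat \<lfloor>(real n - 1) / 2\<rfloor>.
          (-1) ^ k * real (n choose k) * ((real n - 1) / 2 - real k) ^ n))"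
proof -
  let ?C = "cube_below_hyperplane 2 (real n - 1) :: (real^'n) set"
  have "1 \<le> n"
    using assms by auto
  have C: "?C \<in> lmeasurable" "(\<lambda>y. y - 1) ` ?C \<subseteq> cbox (- 1) 1"
    using lmeasurable_cube_below_hyperplane[of 2]
    by (auto simp: cube_below_hyperplane_def mem_box_cart)
  have "measure lebesgue (trace_nonneg_polytope :: (real ^ 'n) set) =
      measure lebesgue (cbox (- 1) (1 :: real^'n)) - measure lebesgue ?C"
    unfolding trace_nonneg_polytope_eq_cube_Diff assms
    using measurable_measure_Diff[OF _ fmeasurableD C(2)] measurable_translation_subtract[OF C(1)]
    by (simp add: measure_translation_subtract)
  also have "\<dots> = 2 ^ n - (\<Sum>k=0..n. (-1)^k * real (n choose k) * max 0 (real n - 1 - 2 * real k) ^ n) / fact n"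
    using measure_cube_below_hyperplane[of 2 "real n - 1", where 'n = 'n] assms
    by (simp add: content_cbox_if_cart interval_eq_empty_cart)
  also have "\<dots> = 2 ^ n - 2 ^ n * (\<Sum>k=0..nat \<lfloor>(real n - 1) / 2\<rfloor>.
      (-1)^k * real (n choose k) * ((real n - 1) / 2 - real k) ^ n) / fact n"
    by (simp only: sum_max_pow_eq_sum_floor[OF \<open>1 \<le> n\<close>])
  finally show ?thesis
    by (simp add: algebra_simps)
qed

end
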